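(* Let $\mathcal{I}$ be an instance of vertex cover and let $\mathcal{T}_S(\mathcal{I})$ be a branch-and-bound tree generated by strong-branching (product score) with worst-bound node selection, ties broken by largest depth. Let $N$ be a node of $\mathcal{T}_S(\mathcal{I})$ whose LP optimal value is less than $\mathrm{OPT}(\mathcal{I})$. Then strong-branching branches at $N$ on some $v\notin I(\mathcal{I},N)$, and both children $N_{v,0}$ and $N_{v,1}$ have LP optimal value at least $\tfrac12$ more than that of $N$.
   Context: Vertex cover IP for a graph $G=(V,E)$: minimize $\sum_v x_v$ subject to $x_u+x_v\ge1$ ($uv\in E$), $x\in\{0,1\}^V$; LP relaxation uses $x\in[0,1]^V$; $\mathrm{OPT}(\mathcal{I})$ is the IP optimal value. Each node $N$ is the LP relaxation plus fixings of variables to $0$ or $1$ made on the path from the root; $N_{v,0},N_{v,1}$ denote the children obtained by adding $x_v=0$, $x_v=1$. The LP solver returns some optimal solution at each node. Strong branching with product score: at $N$ with LP value $z$ and returned solution $\hat x$, for each $j$ with $\hat x_j$ fractional compute children's LP values $z^0_j,z^1_j$ ($+\infty$ if infeasible), $\Delta^-_j=z^0_j-z$, $\Delta^+_j=z^1_j-z$, and branch on a maximizer of $\mathrm{score}_P(j)=\Delta^+_j\Delta^-_j$ (with $0\cdot\infty=0$). Worst-bound rule: process an open node of smallest LP value. $I(\mathcal{I},N)$ is the union, over all optimal solutions $x$ of the LP at $N$, of $\{j:x_j\in\{0,1\}\}$. *)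

theory Defs
  imports Complex_Main "HOL-Library.Extended_Real"
begin

text \<open>Graph G = (V,E): V finite vertex set, E a set of (ordered representatives of)
 edges. A B&B node is the list of fixings (vertex, value) made on the path from the
 root, in order; True means x_v = 1, False means x_v = 0. Depth = length.\<close>

type_synonym 'a node = "('a \<times> bool) list"

definition lp_feas :: "'a set \<Rightarrow> ('a \<times> 'a) set \<Rightarrow> 'a node \<Rightarrow> ('a \<Rightarrow> real) set" where
  "lp_feas V E N = {x. (\<forall>v\<in>V. 0 \<le> x v \<and> x v \<le> 1) \<and> (\<forall>v. v \<notin> V \<longrightarrow> x v = 0)
      \<and> (\<forall>(u,w)\<in>E. x u + x w \<ge> 1)
      \<and> (\<forall>(v,b)\<in>set N. x v = (if b then 1 else 0))}"

text \<open>LP optimal value at N (+\<infinity> if infeasible).\<close>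
definition lp_val :: "'a set \<Rightarrow> ('a \<times> 'a) set \<Rightarrow> 'a node \<Rightarrow> ereal" where
  "lp_val V E N = (INF x\<in>lp_feas V E N. ereal (\<Sum>v\<in>V. x v))"

definition lp_opt :: "'a set \<Rightarrow> ('a \<times> 'a) set \<Rightarrow> 'a node \<Rightarrow> ('a \<Rightarrow> real) \<Rightarrow> bool" where
  "lp_opt V E N x \<longleftrightarrow> x \<in> lp_feas V E N \<and> ereal (\<Sum>v\<in>V. x v) = lp_val V E N"

definition vc_opt :: "'a set \<Rightarrow> ('a \<times> 'a) set \<Rightarrow> ereal" where
  "vc_opt V E = (INF x\<in>{x\<in>lp_feas V E []. \<forall>v\<in>V. x v \<in> {0,1}}. ereal (\<Sum>v\<in>V. x v))"

definition int_set :: "'a set \<Rightarrow> ('a \<times> 'a) set \<Rightarrow> 'a node \<Rightarrow> 'a set" where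
  "int_set V E N = {j\<in>V. \<exists>x. lp_opt V E N x \<and> x j \<in> {0,1}}"

definition fractional :: "real \<Rightarrow> bool" where
  "fractional r \<longleftrightarrow> 0 < r \<and> r < 1"

text \<open>Product score (ereal: 0 * \<infinity> = 0).\<close>
definition sb_score :: "'a set \<Rightarrow> ('a \<times> 'a) set \<Rightarrow> 'a node \<Rightarrow> 'a \<Rightarrow> ereal" where
  "sb_score V E N j =
     (lp_val V E (N @ [(j,True)]) - lp_val V E N) * (lp_val V E (N @ [(j,False)]) - lp_val V E N)"

definition sb_branch :: "'a set \<Rightarrow> ('a \<times> 'a) set \<Rightarrow> 'a node \<Rightarrow> ('a \<Rightarrow> real) \<Rightarrow> 'a \<Rightarrow> bool" where
  "sb_branch V E N xh v \<longleftrightarrow> v \<in> V \<and> fractional (xh v) \<and>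
     (\<forall>j\<in>V. fractional (xh j) \<longrightarrow> sb_score V E N j \<le> sb_score V E N v)"

definition select_node :: "'a set \<Rightarrow> ('a \<times> 'a) set \<Rightarrow> 'a node set \<Rightarrow> 'a node \<Rightarrow> bool" where
  "select_node V E Op N \<longleftrightarrow> N \<in> Op \<and> (\<forall>M\<in>Op. lp_val V E N \<le> lp_val V E M) \<and>
     (\<forall>M\<in>Op. lp_val V E M = lp_val V E N \<longrightarrow> length M \<le> length N)"

text \<open>Reachable states of branch-and-bound: open nodes, incumbent value,
 all created nodes, branching variable of each branched node.\<close>
inductive bb_run :: "'a set \<Rightarrow> ('a \<times> 'a) set \<Rightarrow> 'a node set \<Rightarrow> ereal \<Rightarrow> 'a node set
    \<Rightarrow> ('a node \<Rightarrow> 'a option) \<Rightarrow> bool" for V E where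
  init: "bb_run V E {[]} \<infinity> {[]} (\<lambda>_. None)"
| prune: "bb_run V E Op inc Nd br \<Longrightarrow> select_node V E Op N \<Longrightarrow> inc \<le> lp_val V E N
     \<Longrightarrow> bb_run V E (Op - {N}) inc Nd br"
| integral: "bb_run V E Op inc Nd br \<Longrightarrow> select_node V E Op N \<Longrightarrow> lp_val V E N < inc
     \<Longrightarrow> lp_opt V E N xh \<Longrightarrow> (\<forall>v\<in>V. xh v \<in> {0,1})
     \<Longrightarrow> bb_run V E (Op - {N}) (lp_val V E N) Nd br"
| branch: "bb_run V E Op inc Nd br \<Longrightarrow> select_node V E Op N \<Longrightarrow> lp_val V E N < inc
     \<Longrightarrow> lp_opt V E N xh \<Longrightarrow> \<not> (\<forall>v\<in>V. xh v \<in> {0,1}) \<Longrightarrow> sb_branch V E N xh v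
     \<Longrightarrow> bb_run V E ((Op - {N}) \<union> {N @ [(v,False)], N @ [(v,True)]}) inc
           (Nd \<union> {N @ [(v,False)], N @ [(v,True)]}) (br(N := Some v))"

end

theory Submission
  imports Defs
begin

text \<open>At every node the vertex cover LP is half-integral: the coordinates outside \<open>{0,1/2,1}\<close> can be
  shifted simultaneously towards or away from \<open>1/2\<close> without leaving the polytope, and one of the two
  directions does not increase the cost. Two half-integral optima merge into one that is integral
  wherever either of them is, so if every variable lies in \<open>I(N)\<close> the LP has an integral optimum and
  its value is at least \<open>OPT\<close>. Hence below \<open>OPT\<close> some \<open>j\<close> lies outside \<open>I(N)\<close>; fixing it either way
  excludes all optima of \<open>N\<close> and, by half-integrality, raises the bound by at least \<open>1/2\<close>, so \<open>j\<close> has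
  positive product score. A variable in \<open>I(N)\<close> scores \<open>0\<close>, since one of its children keeps an optimum.
  So strong branching picks some \<open>v \<notin> I(N)\<close>. Finally, in a finished run a node whose bound is below
  \<open>OPT\<close> can have been neither pruned nor solved integrally, so it was branched on.\<close>

section \<open>The LP at a node\<close>

lemma lp_feasD:
  assumes "x \<in> lp_feas V E N"
  shows "\<And>v. v \<in> V \<Longrightarrow> 0 \<le> x v \<and> x v \<le> 1" "\<And>v. v \<notin> V \<Longrightarrow> x v = 0"
    "\<And>u w. (u, w) \<in> E \<Longrightarrow> 1 \<le> x u + x w"
    "\<And>v b. (v, b) \<in> set N \<Longrightarrow> x v = (if b then 1 else 0)"
  using assms unfolding lp_feas_def by auto

text \<open>Outside \<open>V\<close> and at the fixed variables any two feasible points agree on a value in \<open>{0,1}\<close>.\<close>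
lemma lp_feasI:
  assumes "x \<in> lp_feas V E N" "z \<in> lp_feas V E N"
    and "\<And>v. v \<in> V \<Longrightarrow> 0 \<le> y v \<and> y v \<le> 1"
    and "\<And>u w. (u, w) \<in> E \<Longrightarrow> 1 \<le> y u + y w"
    and "\<And>v. x v = z v \<Longrightarrow> x v \<in> {0, 1} \<Longrightarrow> y v = x v"
  shows "y \<in> lp_feas V E N"
  using assms lp_feasD[OF assms(1)] lp_feasD[OF assms(2)] unfolding lp_feas_def by fastforce

lemma lp_opt_feas: "lp_opt V E N x \<Longrightarrow> x \<in> lp_feas V E N"
  unfolding lp_opt_def by simp

lemma lp_opt_val: "lp_opt V E N x \<Longrightarrow> lp_val V E N = ereal (sum x V)"
  unfolding lp_opt_def by simp

lemma lp_val_le: "z \<in> lp_feas V E N \<Longrightarrow> lp_val V E N \<le> ereal (sum z V)"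
  unfolding lp_val_def by (rule INF_lower)

lemma lp_opt_le: "lp_opt V E N x \<Longrightarrow> z \<in> lp_feas V E N \<Longrightarrow> sum x V \<le> sum z V"
  using lp_val_le lp_opt_val by (metis ereal_less_eq(3))

lemma lp_optI:
  assumes "x \<in> lp_feas V E N" "\<And>z. z \<in> lp_feas V E N \<Longrightarrow> sum x V \<le> sum z V"
  shows "lp_opt V E N x"
proof -
  have "lp_val V E N = ereal (sum x V)"
    using lp_val_le[OF assms(1)] unfolding lp_val_def by (auto intro!: antisym INF_greatest assms(2))
  then show ?thesis using assms(1) unfolding lp_opt_def by simp
qed

lemma lp_opt_if_le_opt: "lp_opt V E N x \<Longrightarrow> y \<in> lp_feas V E N \<Longrightarrow> sum y V \<le> sum x V \<Longrightarrow> lp_opt V E N y"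
  using lp_optI lp_opt_le order_trans by meson

lemma lp_val_infeasible: "lp_feas V E N = {} \<Longrightarrow> lp_val V E N = \<infinity>"
  unfolding lp_val_def by (simp add: top_ereal_def)

lemma lp_feas_child_subset: "lp_feas V E (N @ [(j, b)]) \<subseteq> lp_feas V E N"
  unfolding lp_feas_def by auto

lemma lp_val_le_child: "lp_val V E N \<le> lp_val V E (N @ [(j, b)])"
  unfolding lp_val_def by (rule INF_superset_mono[OF lp_feas_child_subset]) simp

lemma vc_opt_le_integral_lp_opt:
  assumes "lp_opt V E N x" "\<forall>v\<in>V. x v \<in> {0, 1}"
  shows "vc_opt V E \<le> lp_val V E N"
proof -
  have "x \<in> {x \<in> lp_feas V E []. \<forall>v\<in>V. x v \<in> {0, 1}}"
    using lp_opt_feas[OF assms(1)] assms(2) unfolding lp_feas_def by auto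
  then have "vc_opt V E \<le> ereal (sum x V)" unfolding vc_opt_def by (rule INF_lower)
  then show ?thesis using lp_opt_val[OF assms(1)] by simp
qed

section \<open>Half-integrality of the LP\<close>

definition half_dir :: "real \<Rightarrow> real" where
  "half_dir a = (if 0 < a \<and> a < 1/2 then 1 else if 1/2 < a \<and> a < 1 then -1 else 0)"

text \<open>Moving \<open>a\<close> by \<open>t\<close> towards \<open>1/2\<close> (away from it if \<open>t < 0\<close>) keeps it in \<open>[0,1]\<close> and on its side
  of \<open>1/2\<close>.\<close>
definition admissible_shift :: "real \<Rightarrow> real \<Rightarrow> bool" where
  "admissible_shift a t \<longleftrightarrow> (half_dir a \<noteq> 0 \<longrightarrow> - min a (1 - a) \<le> t \<and> t \<le> \<bar>a - 1/2\<bar>)"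

definition half_integral :: "'a set \<Rightarrow> ('a \<Rightarrow> real) \<Rightarrow> bool" where
  "half_integral V x \<longleftrightarrow> (\<forall>v\<in>V. x v \<in> {0, 1/2, 1})"

definition non_half_integral :: "'a set \<Rightarrow> ('a \<Rightarrow> real) \<Rightarrow> 'a set" where
  "non_half_integral V x = {v\<in>V. x v \<notin> {0, 1/2, 1}}"

lemma half_dir_eq_0_iff: "0 \<le> a \<Longrightarrow> a \<le> 1 \<Longrightarrow> half_dir a = 0 \<longleftrightarrow> a \<in> {0, 1/2, 1}"
  unfolding half_dir_def by auto

lemma half_dir_half_integral: "a \<in> {0, 1/2, 1} \<Longrightarrow> half_dir a = 0"
  unfolding half_dir_def by auto

lemma half_shift_bounds:
  assumes "0 \<le> a" "a \<le> 1" "admissible_shift a t"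
  shows "0 \<le> a + t * half_dir a \<and> a + t * half_dir a \<le> 1"
  using assms unfolding admissible_shift_def half_dir_def by (auto split: if_splits)

lemma half_shift_edge:
  assumes "1 \<le> a + b" "0 \<le> a" "a \<le> 1" "0 \<le> b" "b \<le> 1"
    and "admissible_shift a t" "admissible_shift b t"
  shows "1 \<le> (a + t * half_dir a) + (b + t * half_dir b)"
  using assms unfolding admissible_shift_def half_dir_def by (auto split: if_splits)

lemma half_dir_nonzero_slack:
  "half_dir a \<noteq> 0 \<Longrightarrow> 0 < \<bar>a - 1/2\<bar> \<and> 0 < min a (1 - a)"
  unfolding half_dir_def by (auto split: if_splits)

lemma half_shift_reaches_half: "half_dir a \<noteq> 0 \<Longrightarrow> a + \<bar>a - 1/2\<bar> * half_dir a = 1/2"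
  unfolding half_dir_def by (auto split: if_splits)

lemma half_shift_reaches_integer: "half_dir a \<noteq> 0 \<Longrightarrow> a + - min a (1 - a) * half_dir a \<in> {0, 1}"
  unfolding half_dir_def by (auto split: if_splits)

lemma lp_feas_half_shift:
  assumes EV: "E \<subseteq> V \<times> V" and xf: "x \<in> lp_feas V E N"
    and adm: "\<And>v. v \<in> V \<Longrightarrow> admissible_shift (x v) t"
  shows "(\<lambda>v. x v + t * half_dir (x v)) \<in> lp_feas V E N"
proof (rule lp_feasI[OF xf xf])
  fix u w assume "(u, w) \<in> E"
  with EV show "1 \<le> (x u + t * half_dir (x u)) + (x w + t * half_dir (x w))"
    using half_shift_edge lp_feasD(1,3)[OF xf] adm by blast
qed (use half_shift_bounds lp_feasD(1)[OF xf] adm half_dir_half_integral in auto)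

lemma non_half_integral_half_shift:
  assumes "v0 \<in> non_half_integral V x" "x v0 + t * half_dir (x v0) \<in> {0, 1/2, 1}"
  shows "non_half_integral V (\<lambda>v. x v + t * half_dir (x v)) \<subset> non_half_integral V x"
  using assms half_dir_half_integral unfolding non_half_integral_def by fastforce

lemma extremal_admissible_shifts:
  assumes fin: "finite V" and box: "\<And>v. v \<in> V \<Longrightarrow> 0 \<le> x v \<and> x v \<le> 1"
    and ne: "non_half_integral V x \<noteq> {}"
  obtains t1 t2 where "0 \<le> t1" "0 \<le> t2"
    "\<forall>v\<in>V. admissible_shift (x v) t1 \<and> admissible_shift (x v) (- t2)"
    "\<exists>v\<in>non_half_integral V x. x v + t1 * half_dir (x v) \<in> {0, 1/2, 1}"
    "\<exists>v\<in>non_half_integral V x. x v + - t2 * half_dir (x v) \<in> {0, 1/2, 1}"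
proof -
  define B where "B = non_half_integral V x"
  have finB: "finite B" using fin unfolding B_def non_half_integral_def by simp
  have B_iff: "v \<in> B \<longleftrightarrow> v \<in> V \<and> half_dir (x v) \<noteq> 0" for v
    using half_dir_eq_0_iff[of "x v"] box[of v] unfolding B_def non_half_integral_def by auto
  define t1 where "t1 = Min ((\<lambda>v. \<bar>x v - 1/2\<bar>) ` B)"
  define t2 where "t2 = Min ((\<lambda>v. min (x v) (1 - x v)) ` B)"
  have "B \<noteq> {}" using ne unfolding B_def .
  then have "t1 \<in> (\<lambda>v. \<bar>x v - 1/2\<bar>) ` B" "t2 \<in> (\<lambda>v. min (x v) (1 - x v)) ` B"
    unfolding t1_def t2_def using finB by (intro Min_in; simp)+
  then obtain v1 v2 where v1: "v1 \<in> B" "t1 = \<bar>x v1 - 1/2\<bar>"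
    and v2: "v2 \<in> B" "t2 = min (x v2) (1 - x v2)" by blast
  have t1_pos: "0 \<le> t1" and t2_pos: "0 \<le> t2"
    using v1 v2 B_iff half_dir_nonzero_slack by fastforce+
  have adm: "admissible_shift (x v) t1 \<and> admissible_shift (x v) (- t2)" if "v \<in> V" for v
  proof -
    have "t1 \<le> \<bar>x v - 1/2\<bar>" if "v \<in> B"
      unfolding t1_def using finB that by (intro Min_le) auto
    moreover have "t2 \<le> min (x v) (1 - x v)" if "v \<in> B"
      unfolding t2_def using finB that by (intro Min_le) auto
    ultimately show ?thesis
      using B_iff \<open>v \<in> V\<close> t1_pos t2_pos unfolding admissible_shift_def by auto
  qed
  have "x v1 + t1 * half_dir (x v1) \<in> {0, 1/2, 1}" "x v2 + - t2 * half_dir (x v2) \<in> {0, 1/2, 1}"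
    using v1 v2 B_iff half_shift_reaches_half half_shift_reaches_integer by auto
  with v1(1) v2(1) have "\<exists>v\<in>B. x v + t1 * half_dir (x v) \<in> {0, 1/2, 1}"
    "\<exists>v\<in>B. x v + - t2 * half_dir (x v) \<in> {0, 1/2, 1}" by blast+
  with adm show ?thesis by (intro that[OF t1_pos t2_pos]) (simp_all add: B_def)
qed

text \<open>The cost changes linearly along the shift, so one of the two extremal shifts does not increase it.\<close>
lemma half_integral_improve:
  assumes fin: "finite V" and EV: "E \<subseteq> V \<times> V" and xf: "x \<in> lp_feas V E N"
    and ne: "non_half_integral V x \<noteq> {}"
  shows "\<exists>y\<in>lp_feas V E N. sum y V \<le> sum x V
           \<and> non_half_integral V y \<subset> non_half_integral V x
           \<and> (\<forall>v. x v \<in> {0, 1/2, 1} \<longrightarrow> y v = x v)"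
proof -
  define shift where "shift t v = x v + t * half_dir (x v)" for t v
  obtain t1 t2 where t_pos: "0 \<le> t1" "0 \<le> t2"
    and adm: "\<forall>v\<in>V. admissible_shift (x v) t1 \<and> admissible_shift (x v) (- t2)"
    and reach: "\<exists>v\<in>non_half_integral V x. x v + t1 * half_dir (x v) \<in> {0, 1/2, 1}"
      "\<exists>v\<in>non_half_integral V x. x v + - t2 * half_dir (x v) \<in> {0, 1/2, 1}"
    by (rule extremal_admissible_shifts[OF fin lp_feasD(1)[OF xf] ne])
  have good: "shift t \<in> lp_feas V E N \<and> non_half_integral V (shift t) \<subset> non_half_integral V x
      \<and> (\<forall>v. x v \<in> {0, 1/2, 1} \<longrightarrow> shift t v = x v)"
    if t: "t \<in> {t1, - t2}" for t
  proof -
    have "shift t \<in> lp_feas V E N"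
      unfolding shift_def using adm t by (intro lp_feas_half_shift[OF EV xf]) auto
    moreover obtain v0 where "v0 \<in> non_half_integral V x" "x v0 + t * half_dir (x v0) \<in> {0, 1/2, 1}"
      using t reach by auto
    then have "non_half_integral V (shift t) \<subset> non_half_integral V x"
      unfolding shift_def by (rule non_half_integral_half_shift)
    moreover have "\<forall>v. x v \<in> {0, 1/2, 1} \<longrightarrow> shift t v = x v"
      unfolding shift_def using half_dir_half_integral by simp
    ultimately show ?thesis by blast
  qed
  have cost: "sum (shift t) V = sum x V + t * (\<Sum>v\<in>V. half_dir (x v))" for t
    unfolding shift_def by (simp add: sum.distrib sum_distrib_left)
  obtain t where t: "t \<in> {t1, - t2}" and cheaper: "sum (shift t) V \<le> sum x V"
  proof (cases "(\<Sum>v\<in>V. half_dir (x v)) \<le> 0")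
    case True
    then have "sum (shift t1) V \<le> sum x V" unfolding cost using t_pos by (simp add: mult_nonneg_nonpos)
    then show ?thesis by (rule that[rotated]) simp
  next
    case False
    then have "sum (shift (- t2)) V \<le> sum x V" unfolding cost using t_pos by simp
    then show ?thesis by (rule that[rotated]) simp
  qed
  with good[OF t] show ?thesis by blast
qed

lemma half_integral_rounding:
  assumes fin: "finite V" and EV: "E \<subseteq> V \<times> V"
  shows "x \<in> lp_feas V E N \<Longrightarrow> \<exists>y\<in>lp_feas V E N. half_integral V y \<and> sum y V \<le> sum x V
           \<and> (\<forall>v. x v \<in> {0, 1/2, 1} \<longrightarrow> y v = x v)"
proof (induction "card (non_half_integral V x)" arbitrary: x rule: less_induct)
  case (less x)
  show ?case
  proof (cases "non_half_integral V x = {}")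
    case True
    then have "half_integral V x" unfolding half_integral_def non_half_integral_def by auto
    then show ?thesis using less.prems by blast
  next
    case False
    from half_integral_improve[OF fin EV less.prems False] obtain x' where
      x': "x' \<in> lp_feas V E N" "sum x' V \<le> sum x V" "non_half_integral V x' \<subset> non_half_integral V x"
          "\<forall>v. x v \<in> {0, 1/2, 1} \<longrightarrow> x' v = x v" by blast
    have "card (non_half_integral V x') < card (non_half_integral V x)"
      using x'(3) fin by (intro psubset_card_mono) (simp_all add: non_half_integral_def)
    from less.hyps[OF this x'(1)] x' show ?thesis by force
  qed
qed

text \<open>Half-integral points are finitely many, and by rounding they include a point below any feasible one.\<close>
lemma half_integral_lp_opt_exists:
  assumes fin: "finite V" and EV: "E \<subseteq> V \<times> V" and ne: "lp_feas V E N \<noteq> {}"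
  shows "\<exists>x. lp_opt V E N x \<and> half_integral V x"
proof -
  define H where "H = {y \<in> lp_feas V E N. half_integral V y}"
  have "H \<subseteq> {f. \<forall>v. (v \<in> V \<longrightarrow> f v \<in> {0, 1/2, 1}) \<and> (v \<notin> V \<longrightarrow> f v = 0)}"
    using lp_feasD(2) by (auto simp: H_def half_integral_def)
  then have finH: "finite H"
    by (rule finite_subset) (intro finite_set_of_finite_funs fin, simp)
  have below: "\<exists>y\<in>H. sum y V \<le> sum z V" if "z \<in> lp_feas V E N" for z
    using half_integral_rounding[OF fin EV that] by (auto simp: H_def)
  then have "H \<noteq> {}" using ne by blast
  then have "Min ((\<lambda>y. sum y V) ` H) \<in> (\<lambda>y. sum y V) ` H" using finH by simp
  then obtain x where x: "x \<in> H" "sum x V = Min ((\<lambda>y. sum y V) ` H)" by auto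
  have "sum x V \<le> sum z V" if z: "z \<in> lp_feas V E N" for z
  proof -
    obtain y where "y \<in> H" "sum y V \<le> sum z V" using below[OF z] by blast
    moreover have "sum x V \<le> sum y V" unfolding x(2) using finH \<open>y \<in> H\<close> by simp
    ultimately show ?thesis by linarith
  qed
  moreover have "x \<in> lp_feas V E N" "half_integral V x" using x(1) by (simp_all add: H_def)
  ultimately show ?thesis using lp_optI by blast
qed

lemma half_integral_lp_opt_integral_at:
  assumes fin: "finite V" and EV: "E \<subseteq> V \<times> V" and j: "j \<in> int_set V E N"
  shows "\<exists>y. lp_opt V E N y \<and> half_integral V y \<and> y j \<in> {0, 1}"
proof -
  from j obtain x where x: "lp_opt V E N x" "x j \<in> {0, 1}" unfolding int_set_def by blast
  from half_integral_rounding[OF fin EV lp_opt_feas[OF x(1)]] obtain y where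
    y: "y \<in> lp_feas V E N" "half_integral V y" "sum y V \<le> sum x V"
      "\<forall>v. x v \<in> {0, 1/2, 1} \<longrightarrow> y v = x v"
    by blast
  have "lp_opt V E N y" using lp_opt_if_le_opt[OF x(1) y(1,3)] .
  moreover have "y j \<in> {0, 1}" using x(2) y(4) by auto
  ultimately show ?thesis using y(2) by blast
qed

lemma half_integral_sum_Ints:
  assumes "half_integral V y"
  shows "2 * sum y V \<in> \<int>"
proof -
  have "2 * y v \<in> \<int>" if "v \<in> V" for v
  proof -
    from assms that consider "y v = 0" | "y v = 1/2" | "y v = 1" unfolding half_integral_def by auto
    then show ?thesis
    proof cases
      case 2
      then have "2 * y v = 1" by simp
      then show ?thesis by (metis Ints_1)
    qed simp_all
  qed
  then show ?thesis unfolding sum_distrib_left by (rule Ints_sum)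
qed

section \<open>Merging half-integral optima\<close>

lemma half_integral_prefer_edge:
  fixes a b c d :: real
  assumes "a \<in> {0, 1/2, 1}" "b \<in> {0, 1/2, 1}" "c \<in> {0, 1/2, 1}" "d \<in> {0, 1/2, 1}"
    and "1 \<le> a + b" "1 \<le> c + d"
  shows "1 \<le> (if a \<in> {0, 1} then a else c) + (if b \<in> {0, 1} then b else d)"
  using assms by auto

lemma half_integral_meet_edge:
  fixes a b c d :: real
  assumes "a \<in> {0, 1/2, 1}" "b \<in> {0, 1/2, 1}" "c \<in> {0, 1/2, 1}" "d \<in> {0, 1/2, 1}"
    and "1 \<le> a + b" "1 \<le> c + d"
  shows "1 \<le> (if a = c then a else 1/2) + (if b = d then b else 1/2)"
  using assms by auto

lemma half_integral_merge_identity: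
  fixes a c :: real
  assumes "a \<in> {0, 1/2, 1}" "c \<in> {0, 1/2, 1}"
  shows "(if a \<in> {0, 1} then a else c) + (if c \<in> {0, 1} then c else a) + 2 * (if a = c then a else 1/2)
    = 2 * a + 2 * c"
  using assms by auto

lemma lp_feas_prefer_integral:
  assumes EV: "E \<subseteq> V \<times> V" and xf: "x \<in> lp_feas V E N" and yf: "y \<in> lp_feas V E N"
    and hx: "half_integral V x" and hy: "half_integral V y"
  shows "(\<lambda>v. if x v \<in> {0, 1} then x v else y v) \<in> lp_feas V E N"
proof (rule lp_feasI[OF xf yf])
  fix u w assume e: "(u, w) \<in> E"
  with EV have "u \<in> V" "w \<in> V" by auto
  with hx hy show "1 \<le> (if x u \<in> {0, 1} then x u else y u) + (if x w \<in> {0, 1} then x w else y w)"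
    unfolding half_integral_def
    by (intro half_integral_prefer_edge lp_feasD(3)[OF xf e] lp_feasD(3)[OF yf e]) auto
qed (use lp_feasD(1)[OF xf] lp_feasD(1)[OF yf] in auto)

lemma lp_feas_half_meet:
  assumes EV: "E \<subseteq> V \<times> V" and xf: "x \<in> lp_feas V E N" and yf: "y \<in> lp_feas V E N"
    and hx: "half_integral V x" and hy: "half_integral V y"
  shows "(\<lambda>v. if x v = y v then x v else 1/2) \<in> lp_feas V E N"
proof (rule lp_feasI[OF xf yf])
  fix u w assume e: "(u, w) \<in> E"
  with EV have "u \<in> V" "w \<in> V" by auto
  with hx hy show "1 \<le> (if x u = y u then x u else 1/2) + (if x w = y w then x w else 1/2)"
    unfolding half_integral_def
    by (intro half_integral_meet_edge lp_feasD(3)[OF xf e] lp_feasD(3)[OF yf e]) auto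
qed (use lp_feasD(1)[OF xf] lp_feasD(1)[OF yf] in auto)

text \<open>With \<open>u'\<close> preferring the integral values of \<open>y\<close> and \<open>w\<close> the meet, \<open>u + u' + 2 w = 2 x + 2 y\<close>
  pointwise; as \<open>u'\<close> and \<open>w\<close> cost at least the optimum, \<open>u\<close> costs at most the optimum.\<close>
lemma half_integral_lp_opt_merge:
  assumes EV: "E \<subseteq> V \<times> V" and ox: "lp_opt V E N x" and oy: "lp_opt V E N y"
    and hx: "half_integral V x" and hy: "half_integral V y"
  shows "lp_opt V E N (\<lambda>v. if x v \<in> {0, 1} then x v else y v)"
proof -
  define u where "u v = (if x v \<in> {0, 1} then x v else y v)" for v
  define u' where "u' v = (if y v \<in> {0, 1} then y v else x v)" for v
  define w where "w v = (if x v = y v then x v else 1/2)" for v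
  note xf = lp_opt_feas[OF ox] and yf = lp_opt_feas[OF oy]
  have uf: "u \<in> lp_feas V E N" and u'f: "u' \<in> lp_feas V E N" and wf: "w \<in> lp_feas V E N"
    unfolding u_def u'_def w_def
    using lp_feas_prefer_integral[OF EV xf yf hx hy] lp_feas_prefer_integral[OF EV yf xf hy hx]
      lp_feas_half_meet[OF EV xf yf hx hy] by simp_all
  have "(\<Sum>v\<in>V. u v + u' v + 2 * w v) = (\<Sum>v\<in>V. 2 * x v + 2 * y v)"
    using hx hy unfolding half_integral_def u_def u'_def w_def
    by (intro sum.cong half_integral_merge_identity) auto
  then have "sum u V + sum u' V + 2 * sum w V = 2 * sum x V + 2 * sum y V"
    by (simp add: sum.distrib sum_distrib_left)
  moreover have "sum x V = sum y V" using lp_opt_val[OF ox] lp_opt_val[OF oy] by simp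
  moreover have "sum x V \<le> sum u' V" "sum x V \<le> sum w V" using lp_opt_le[OF ox] u'f wf by auto
  ultimately have "sum u V \<le> sum x V" by linarith
  then show ?thesis using lp_opt_if_le_opt[OF ox uf] unfolding u_def by simp
qed

lemma integral_lp_opt_if_int_set_full:
  assumes fin: "finite V" and EV: "E \<subseteq> V \<times> V" and ne: "lp_feas V E N \<noteq> {}"
    and full: "V \<subseteq> int_set V E N"
  shows "\<exists>x. lp_opt V E N x \<and> (\<forall>v\<in>V. x v \<in> {0, 1})"
proof -
  have "\<exists>x. lp_opt V E N x \<and> half_integral V x \<and> (\<forall>v\<in>K. x v \<in> {0, 1})" if "K \<subseteq> V" for K
    using finite_subset[OF that fin] that
  proof (induction K rule: finite_induct)
    case empty
    then show ?case using half_integral_lp_opt_exists[OF fin EV ne] by blast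
  next
    case (insert j K)
    then obtain x where x: "lp_opt V E N x" "half_integral V x" "\<forall>v\<in>K. x v \<in> {0, 1}" by blast
    from insert.prems full obtain y where y: "lp_opt V E N y" "half_integral V y" "y j \<in> {0, 1}"
      using half_integral_lp_opt_integral_at[OF fin EV] by blast
    let ?u = "\<lambda>v. if x v \<in> {0, 1} then x v else y v"
    have "lp_opt V E N ?u" by (rule half_integral_lp_opt_merge[OF EV x(1) y(1) x(2) y(2)])
    moreover have "half_integral V ?u" using x(2) y(2) unfolding half_integral_def by auto
    ultimately show ?case using x(3) y(3) by (intro exI[of _ ?u]) auto
  qed
  then show ?thesis by blast
qed

section \<open>Strong branching below the optimum\<close>

lemma lp_val_child_eq:
  assumes "lp_opt V E N x" "x j = (if b then 1 else 0)"
  shows "lp_val V E (N @ [(j, b)]) = lp_val V E N"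
proof -
  have "x \<in> lp_feas V E (N @ [(j, b)])"
    using lp_opt_feas[OF assms(1)] assms(2) unfolding lp_feas_def by auto
  then have "lp_val V E (N @ [(j, b)]) \<le> lp_val V E N" using lp_val_le lp_opt_val[OF assms(1)] by metis
  then show ?thesis using lp_val_le_child by (rule antisym)
qed

lemma ereal_plus_half: "ereal c + 1/2 = ereal (c + 1/2)"
  by (simp add: one_ereal_def numeral_eq_ereal ereal_divide)

text \<open>Fixing \<open>j \<notin> I(N)\<close> excludes every optimum of \<open>N\<close>, and both LP values are half-integers.\<close>
lemma lp_val_child_ge_half:
  assumes fin: "finite V" and EV: "E \<subseteq> V \<times> V" and j: "j \<in> V" "j \<notin> int_set V E N"
  shows "lp_val V E N + 1/2 \<le> lp_val V E (N @ [(j, b)])"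
proof (cases "lp_feas V E (N @ [(j, b)]) = {}")
  case True
  then show ?thesis using lp_val_infeasible[OF True] by simp
next
  case False
  then obtain y where y: "lp_opt V E (N @ [(j, b)]) y" "half_integral V y"
    using half_integral_lp_opt_exists[OF fin EV] by blast
  have yf: "y \<in> lp_feas V E N" using lp_opt_feas[OF y(1)] lp_feas_child_subset[of V E N j b] by blast
  with False obtain x where x: "lp_opt V E N x" "half_integral V x"
    using half_integral_lp_opt_exists[OF fin EV] by blast
  have "\<not> lp_opt V E N y"
    using j lp_opt_feas[OF y(1)] unfolding int_set_def lp_feas_def by (auto split: if_splits)
  then have "sum x V < sum y V" using lp_opt_le[OF x(1) yf] lp_opt_if_le_opt[OF x(1) yf] by linarith
  moreover obtain k l :: int where kl: "2 * sum x V = of_int k" "2 * sum y V = of_int l"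
    using half_integral_sum_Ints[OF x(2)] half_integral_sum_Ints[OF y(2)] by (metis Ints_cases)
  ultimately have "k + 1 \<le> l" by simp
  then have "sum x V + 1/2 \<le> sum y V" using kl by linarith
  then show ?thesis unfolding lp_opt_val[OF x(1)] lp_opt_val[OF y(1)] ereal_plus_half by simp
qed

lemma sb_score_eq_0_if_int_set:
  assumes "j \<in> int_set V E N"
  shows "sb_score V E N j = 0"
proof -
  from assms obtain x where x: "lp_opt V E N x" "x j \<in> {0, 1}" unfolding int_set_def by blast
  then consider "lp_val V E (N @ [(j, True)]) = lp_val V E N"
    | "lp_val V E (N @ [(j, False)]) = lp_val V E N"
    using lp_val_child_eq[of V E N x j True] lp_val_child_eq[of V E N x j False] by auto
  then show ?thesis unfolding sb_score_def lp_opt_val[OF x(1)] by cases simp_all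
qed

lemma sb_score_pos_if_gaps:
  assumes "lp_val V E N = ereal c"
    and "lp_val V E N + 1/2 \<le> lp_val V E (N @ [(j, True)])"
    and "lp_val V E N + 1/2 \<le> lp_val V E (N @ [(j, False)])"
  shows "0 < sb_score V E N j"
  using assms(2,3) unfolding sb_score_def assms(1) ereal_plus_half
  by (cases "lp_val V E (N @ [(j, True)])"; cases "lp_val V E (N @ [(j, False)])")
    (auto intro: mult_pos_pos)

lemma bb_run_created_node_cases:
  "bb_run V E Op inc Nd br \<Longrightarrow> vc_opt V E \<le> inc \<and> (\<forall>M\<in>Nd. M \<in> Op
     \<or> (\<exists>v xh. br M = Some v \<and> lp_opt V E M xh \<and> sb_branch V E M xh v) \<or> vc_opt V E \<le> lp_val V E M)"
proof (induction rule: bb_run.induct)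
  case init
  then show ?case by simp
next
  case (prune Op inc Nd br N)
  then show ?case by (metis Diff_iff order_trans singletonD)
next
  case (integral Op inc Nd br N xh)
  then have "vc_opt V E \<le> lp_val V E N" using vc_opt_le_integral_lp_opt by blast
  with integral show ?case by (metis Diff_iff singletonD)
next
  case (branch Op inc Nd br N xh v)
  then show ?case by auto
qed

theorem lemma3p1:
  fixes V :: "'a set" and E :: "('a \<times> 'a) set"
  assumes "finite V" and "E \<subseteq> V \<times> V" and "\<forall>(u,w)\<in>E. u \<noteq> w"
    and "bb_run V E {} inc Nodes br"
    and "N \<in> Nodes"
    and "lp_val V E N < vc_opt V E"
  shows "\<exists>v. br N = Some v \<and> v \<notin> int_set V E N
           \<and> lp_val V E (N @ [(v,False)]) \<ge> lp_val V E N + 1/2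
           \<and> lp_val V E (N @ [(v,True)]) \<ge> lp_val V E N + 1/2"
proof -
  note fin = assms(1) and EV = assms(2) and below_opt = assms(6)
  obtain v xh where br: "br N = Some v" and xh: "lp_opt V E N xh" and v: "sb_branch V E N xh v"
    using bb_run_created_node_cases[OF assms(4)] assms(5) below_opt by force
  have "lp_feas V E N \<noteq> {}" using lp_val_infeasible below_opt by force
  moreover have "\<not> (\<exists>x. lp_opt V E N x \<and> (\<forall>v\<in>V. x v \<in> {0, 1}))"
    using vc_opt_le_integral_lp_opt below_opt by force
  ultimately obtain j where j: "j \<in> V" "j \<notin> int_set V E N"
    using integral_lp_opt_if_int_set_full[OF fin EV] by blast
  have "fractional (xh j)"
    using j xh lp_feasD(1)[OF lp_opt_feas[OF xh]] unfolding int_set_def fractional_def by force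
  moreover have "0 < sb_score V E N j"
    by (rule sb_score_pos_if_gaps[OF lp_opt_val[OF xh] lp_val_child_ge_half[OF fin EV j]
          lp_val_child_ge_half[OF fin EV j]])
  ultimately have "0 < sb_score V E N v" using v j(1) unfolding sb_branch_def by force
  then have "v \<notin> int_set V E N" using sb_score_eq_0_if_int_set by force
  moreover have "v \<in> V" using v unfolding sb_branch_def by simp
  ultimately show ?thesis using br lp_val_child_ge_half[OF fin EV] by blast
qed

end
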